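(* The subvarieties $\mathsf{BA}$ and $\mathsf{SL}$ of $V(\mathsf{BCA})$ are independent. That is, there is a binary term $\varphi(x,y)$ in the type $\langle\wedge,\vee,\neg,J_2,0,1\rangle$ such that $\mathsf{BA}\models\varphi(x,y)\approx x$ and $\mathsf{SL}\models\varphi(x,y)\approx y$.
   Context: $\mathbf{WK}^e$ is the three-element algebra on $\{0,\tfrac12,1\}$ of type $\langle\wedge,\vee,\neg,J_2,0,1\rangle$. Its operations are: - $\neg$ swaps $0,1$ and fixes $\tfrac12$; - $\wedge,\vee$ are Boolean on $\{0,1\}$ and return $\tfrac12$ if some argument is $\tfrac12$; - $J_2(1)=1$ and $J_2(\tfrac12)=J_2(0)=0$. $\mathsf{BCA}=ISP(\mathbf{WK}^e)$ and $V(\mathsf{BCA})=HSP(\mathbf{WK}^e)$. $\mathsf{BA}$ is the subvariety of $V(\mathsf{BCA})$ axiomatised relative to it by $J_2x\approx x$. $\mathsf{SL}$ is the subvariety axiomatised relative to it by $J_2x\approx1$. *)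

theory Defs
  imports Main "HOL-Library.FuncSet"
begin

text \<open>The three-element algebra WK^e on {0, 1/2, 1}: F = 0, U = 1/2, T = 1.\<close>
datatype wk = F | U | T

fun wk_neg :: "wk \<Rightarrow> wk" where
  "wk_neg F = T" | "wk_neg U = U" | "wk_neg T = F"

fun wk_and :: "wk \<Rightarrow> wk \<Rightarrow> wk" where
  "wk_and U _ = U" | "wk_and _ U = U"
| "wk_and T T = T" | "wk_and T F = F" | "wk_and F T = F" | "wk_and F F = F"

fun wk_or :: "wk \<Rightarrow> wk \<Rightarrow> wk" where
  "wk_or U _ = U" | "wk_or _ U = U"
| "wk_or F F = F" | "wk_or T F = T" | "wk_or F T = T" | "wk_or T T = T"

fun wk_J2 :: "wk \<Rightarrow> wk" where
  "wk_J2 T = T" | "wk_J2 U = F" | "wk_J2 F = F"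

record 'a alg =
  acar :: "'a set"
  ameet :: "'a \<Rightarrow> 'a \<Rightarrow> 'a"
  ajoin :: "'a \<Rightarrow> 'a \<Rightarrow> 'a"
  aneg :: "'a \<Rightarrow> 'a"
  aJ2 :: "'a \<Rightarrow> 'a"
  azero :: 'a
  aone :: 'a

definition is_alg :: "('a, 'b) alg_scheme \<Rightarrow> bool" where
  "is_alg A \<longleftrightarrow> azero A \<in> acar A \<and> aone A \<in> acar A \<and>
     (\<forall>x\<in>acar A. \<forall>y\<in>acar A. ameet A x y \<in> acar A \<and> ajoin A x y \<in> acar A) \<and>
     (\<forall>x\<in>acar A. aneg A x \<in> acar A \<and> aJ2 A x \<in> acar A)"

datatype trm = Var nat | Meet trm trm | Join trm trm | Neg trm | J2t trm | Zero | One

fun tvars :: "trm \<Rightarrow> nat set" where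
  "tvars (Var n) = {n}"
| "tvars (Meet s t) = tvars s \<union> tvars t"
| "tvars (Join s t) = tvars s \<union> tvars t"
| "tvars (Neg s) = tvars s"
| "tvars (J2t s) = tvars s"
| "tvars Zero = {}"
| "tvars One = {}"

fun eval :: "('a, 'b) alg_scheme \<Rightarrow> (nat \<Rightarrow> 'a) \<Rightarrow> trm \<Rightarrow> 'a" where
  "eval A v (Var n) = v n"
| "eval A v (Meet s t) = ameet A (eval A v s) (eval A v t)"
| "eval A v (Join s t) = ajoin A (eval A v s) (eval A v t)"
| "eval A v (Neg s) = aneg A (eval A v s)"
| "eval A v (J2t s) = aJ2 A (eval A v s)"
| "eval A v Zero = azero A"
| "eval A v One = aone A"

definition sat :: "('a, 'b) alg_scheme \<Rightarrow> trm \<Rightarrow> trm \<Rightarrow> bool" where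
  "sat A s t \<longleftrightarrow> (\<forall>v. (\<forall>n. v n \<in> acar A) \<longrightarrow> eval A v s = eval A v t)"

definition wk_pow :: "'i set \<Rightarrow> ('i \<Rightarrow> wk) alg" where
  "wk_pow I = \<lparr> acar = (I \<rightarrow>\<^sub>E (UNIV :: wk set)),
     ameet = (\<lambda>f g. \<lambda>i\<in>I. wk_and (f i) (g i)),
     ajoin = (\<lambda>f g. \<lambda>i\<in>I. wk_or (f i) (g i)),
     aneg = (\<lambda>f. \<lambda>i\<in>I. wk_neg (f i)),
     aJ2 = (\<lambda>f. \<lambda>i\<in>I. wk_J2 (f i)),
     azero = (\<lambda>i\<in>I. F),
     aone = (\<lambda>i\<in>I. T) \<rparr>"

definition subalg_set :: "'p set \<Rightarrow> ('p, 'c) alg_scheme \<Rightarrow> bool" where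
  "subalg_set B P \<longleftrightarrow> B \<subseteq> acar P \<and> azero P \<in> B \<and> aone P \<in> B \<and>
     (\<forall>x\<in>B. \<forall>y\<in>B. ameet P x y \<in> B \<and> ajoin P x y \<in> B) \<and>
     (\<forall>x\<in>B. aneg P x \<in> B \<and> aJ2 P x \<in> B)"

definition surj_hom :: "'p set \<Rightarrow> ('p, 'c) alg_scheme \<Rightarrow> ('p \<Rightarrow> 'a) \<Rightarrow> ('a, 'b) alg_scheme \<Rightarrow> bool" where
  "surj_hom B P h A \<longleftrightarrow> h ` B = acar A \<and>
     h (azero P) = azero A \<and> h (aone P) = aone A \<and>
     (\<forall>x\<in>B. \<forall>y\<in>B. h (ameet P x y) = ameet A (h x) (h y) \<and> h (ajoin P x y) = ajoin A (h x) (h y)) \<and>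
     (\<forall>x\<in>B. h (aneg P x) = aneg A (h x) \<and> h (aJ2 P x) = aJ2 A (h x))"

text \<open>A \<in> V(BCA) = HSP(WK^e): A is a homomorphic image of a subalgebra of a
  power of WK^e.  The index sets range over subsets of the type nat \<Rightarrow> wk, which
  has the cardinality of the continuum; this suffices for all algebras with
  countable carrier (in particular carriers of type nat, as used below).\<close>
definition in_VBCA :: "('a, 'b) alg_scheme \<Rightarrow> bool" where
  "in_VBCA A \<longleftrightarrow> is_alg A \<and>
     (\<exists>(I :: (nat \<Rightarrow> wk) set) B h. subalg_set B (wk_pow I) \<and> surj_hom B (wk_pow I) h A)"

definition in_BA :: "('a, 'b) alg_scheme \<Rightarrow> bool" where
  "in_BA A \<longleftrightarrow> in_VBCA A \<and> sat A (J2t (Var 0)) (Var 0)"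

definition in_SL :: "('a, 'b) alg_scheme \<Rightarrow> bool" where
  "in_SL A \<longleftrightarrow> in_VBCA A \<and> sat A (J2t (Var 0)) One"

end

theory Submission
  imports Defs
begin

text \<open>Take \<open>\<phi>(x, y) = J\<^sub>2 x \<or> (y \<and> \<not> y)\<close>. Identities of \<open>WK\<^sup>e\<close> hold in all of
  \<open>V(BCA)\<close>. In \<open>WK\<^sup>e\<close>, \<open>J\<^sub>2 x \<or> (J\<^sub>2 y \<and> \<not> J\<^sub>2 y) \<approx> J\<^sub>2 x\<close>, which turns into \<open>\<phi> \<approx> x\<close>
  once \<open>J\<^sub>2\<close> is the identity. Since \<open>J\<^sub>2 0 \<approx> 0\<close> in \<open>WK\<^sup>e\<close>, the variety \<open>SL\<close> satisfies
  \<open>0 \<approx> 1\<close>, so there \<open>\<phi> = 0 \<or> (y \<and> \<not> y) \<approx> y \<and> 0 = y \<and> 1 \<approx> y\<close>, again by identities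
  of \<open>WK\<^sup>e\<close>.\<close>

definition wk_alg :: "wk alg" where
  "wk_alg = \<lparr> acar = UNIV, ameet = wk_and, ajoin = wk_or, aneg = wk_neg, aJ2 = wk_J2,
     azero = F, aone = T \<rparr>"

lemma satD:
  assumes "sat A s t" "\<forall>n. v n \<in> acar A"
  shows "eval A v s = eval A v t"
  using assms unfolding sat_def by blast

lemma sat_wk_alg_iff: "sat wk_alg s t \<longleftrightarrow> (\<forall>v. eval wk_alg v s = eval wk_alg v t)"
  by (simp add: sat_def wk_alg_def)

lemma eval_wk_pow:
  assumes "\<forall>n. w n \<in> acar (wk_pow I)"
  shows "eval (wk_pow I) w t = (\<lambda>i\<in>I. eval wk_alg (\<lambda>n. w n i) t)"
proof (induction t)
  case (Var n)
  have "w n \<in> I \<rightarrow>\<^sub>E UNIV" using assms by (simp add: wk_pow_def)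
  then show ?case by (auto simp: PiE_def extensional_def)
qed (auto simp: wk_pow_def wk_alg_def)

lemma eval_in_subalg:
  assumes "subalg_set B P" "\<forall>n. w n \<in> B"
  shows "eval P w t \<in> B"
  using assms by (induction t) (auto simp: subalg_set_def)

lemma surj_hom_eval:
  assumes "subalg_set B P" "surj_hom B P h A" "\<forall>n. w n \<in> B"
  shows "h (eval P w t) = eval A (h \<circ> w) t"
  using assms eval_in_subalg[OF assms(1) assms(3)]
  by (induction t) (auto simp: surj_hom_def)

lemma sat_if_in_VBCA_sat_wk:
  fixes A :: "('a, 'b) alg_scheme"
  assumes "in_VBCA A" "sat wk_alg s t"
  shows "sat A s t"
  unfolding sat_def
proof (intro allI impI)
  fix v :: "nat \<Rightarrow> 'a" assume v: "\<forall>n. v n \<in> acar A"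
  obtain I :: "(nat \<Rightarrow> wk) set" and B h where sub: "subalg_set B (wk_pow I)"
    and hom: "surj_hom B (wk_pow I) h A"
    using assms(1) unfolding in_VBCA_def by blast
  have "\<forall>n. \<exists>b\<in>B. h b = v n"
    using v hom unfolding surj_hom_def by (metis imageE)
  then obtain w where "\<forall>n. w n \<in> B \<and> h (w n) = v n"
    by metis
  then have w: "\<forall>n. w n \<in> B" and hw: "h \<circ> w = v"
    by auto
  have w_pow: "\<forall>n. w n \<in> acar (wk_pow I)"
    using w sub by (auto simp: subalg_set_def)
  have "eval A v s = h (eval (wk_pow I) w s)"
    using surj_hom_eval[OF sub hom w] hw by simp
  also have "\<dots> = h (eval (wk_pow I) w t)"
    using assms(2) by (simp add: eval_wk_pow[OF w_pow] sat_wk_alg_iff)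
  also have "\<dots> = eval A v t"
    using surj_hom_eval[OF sub hom w] hw by simp
  finally show "eval A v s = eval A v t" .
qed

lemma wk_J2_join_contradiction:
  "sat wk_alg (Join (J2t (Var 0)) (Meet (J2t (Var 1)) (Neg (J2t (Var 1))))) (J2t (Var 0))"
  unfolding sat_wk_alg_iff by (auto simp: wk_alg_def; case_tac "v 0"; case_tac "v 1") auto

lemma wk_J2_zero: "sat wk_alg (J2t Zero) Zero"
  unfolding sat_wk_alg_iff by (simp add: wk_alg_def)

lemma wk_zero_join_contradiction:
  "sat wk_alg (Join Zero (Meet (Var 1) (Neg (Var 1)))) (Meet (Var 1) Zero)"
  unfolding sat_wk_alg_iff by (auto simp: wk_alg_def; case_tac "v 1") auto

lemma wk_meet_one: "sat wk_alg (Meet (Var 1) One) (Var 1)"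
  unfolding sat_wk_alg_iff by (auto simp: wk_alg_def; case_tac "v 1") auto

definition independence_term :: trm where
  "independence_term = Join (J2t (Var 0)) (Meet (Var 1) (Neg (Var 1)))"

lemma in_BA_J2_eq:
  assumes "in_BA A" "c \<in> acar A"
  shows "aJ2 A c = c"
  using satD[of A "J2t (Var 0)" "Var 0" "\<lambda>_. c"] assms by (simp add: in_BA_def)

lemma in_SL_J2_eq_one:
  assumes "in_SL A" "c \<in> acar A"
  shows "aJ2 A c = aone A"
  using satD[of A "J2t (Var 0)" One "\<lambda>_. c"] assms by (simp add: in_SL_def)

lemma in_SL_zero_eq_one:
  assumes "in_SL A"
  shows "azero A = aone A"
proof -
  have VBCA: "in_VBCA A" using assms by (simp add: in_SL_def)
  then have zero: "azero A \<in> acar A" by (simp add: in_VBCA_def is_alg_def)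
  then have "aJ2 A (azero A) = azero A"
    using satD[OF sat_if_in_VBCA_sat_wk[OF VBCA wk_J2_zero], of "\<lambda>_. azero A"] by simp
  with in_SL_J2_eq_one[OF assms zero] show ?thesis by simp
qed

lemma in_BA_sat_independence_term:
  fixes A :: "('a, 'b) alg_scheme"
  assumes "in_BA A"
  shows "sat A independence_term (Var 0)"
  unfolding sat_def
proof (intro allI impI)
  fix v :: "nat \<Rightarrow> 'a" assume v: "\<forall>n. v n \<in> acar A"
  have "in_VBCA A" using assms by (simp add: in_BA_def)
  from satD[OF sat_if_in_VBCA_sat_wk[OF this wk_J2_join_contradiction] v]
  show "eval A v independence_term = eval A v (Var 0)"
    using in_BA_J2_eq[OF assms] v by (simp add: independence_term_def)
qed

lemma in_SL_sat_independence_term: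
  fixes A :: "('a, 'b) alg_scheme"
  assumes "in_SL A"
  shows "sat A independence_term (Var 1)"
  unfolding sat_def
proof (intro allI impI)
  fix v :: "nat \<Rightarrow> 'a" assume v: "\<forall>n. v n \<in> acar A"
  have VBCA: "in_VBCA A" using assms by (simp add: in_SL_def)
  have "eval A v independence_term = ajoin A (azero A) (ameet A (v 1) (aneg A (v 1)))"
    using in_SL_J2_eq_one[OF assms] in_SL_zero_eq_one[OF assms] v
    by (simp add: independence_term_def)
  also have "\<dots> = ameet A (v 1) (aone A)"
    using satD[OF sat_if_in_VBCA_sat_wk[OF VBCA wk_zero_join_contradiction] v]
      in_SL_zero_eq_one[OF assms] by simp
  also have "\<dots> = v 1"
    using satD[OF sat_if_in_VBCA_sat_wk[OF VBCA wk_meet_one] v] by simp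
  finally show "eval A v independence_term = eval A v (Var 1)" by simp
qed

theorem theorem4p10:
  shows "\<exists>\<phi> :: trm. tvars \<phi> \<subseteq> {0, 1} \<and>
    (\<forall>A :: nat alg. in_BA A \<longrightarrow> sat A \<phi> (Var 0)) \<and>
    (\<forall>A :: nat alg. in_SL A \<longrightarrow> sat A \<phi> (Var 1))"
proof (intro exI conjI allI impI)
  show "tvars independence_term \<subseteq> {0, 1}" by (simp add: independence_term_def)
qed (fact in_BA_sat_independence_term in_SL_sat_independence_term)+

end
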